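(* Let $G$ be a complete graph on an infinite vertex set, let $v\in V(G)$, and let $M$ be a perfect matching of $G-v$. Define $w(e)=0$ if $e\in M$ and $w(e)=1$ otherwise. Then there is no perfect matching $N$ of $G$ such that every perfect matching $N'$ of $G$ with $|N\setminus N'|,|N'\setminus N|<\infty$ satisfies $w[N'\setminus N]\ge w[N\setminus N']$.
   Context: A matching is perfect if every vertex is covered by it. For a set $F$ of edges, $w[F]:=\sum_{e\in F}w(e)$. *)

theory Defs
  imports Main
begin

definition complete_edges :: "'a set \<Rightarrow> 'a set set" where
  "complete_edges V = {{x, y} | x y. x \<in> V \<and> y \<in> V \<and> x \<noteq> y}"

definition matching :: "'a set \<Rightarrow> 'a set set \<Rightarrow> bool" where
  "matching V M \<longleftrightarrow> M \<subseteq> complete_edges V \<and> (\<forall>e\<in>M. \<forall>f\<in>M. e \<noteq> f \<longrightarrow> e \<inter> f = {})"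

definition perfect_matching :: "'a set \<Rightarrow> 'a set set \<Rightarrow> bool" where
  "perfect_matching V M \<longleftrightarrow> matching V M \<and> (\<forall>x\<in>V. \<exists>e\<in>M. x \<in> e)"

end

theory Submission
  imports Defs
begin

(* Suppose N were a perfect matching of G that no finite switch can
   improve.  Starting at v, follow the alternating walk
     v --N-- x1 --M-- x2 --N-- x3 ;
   it exists because N covers v and x2, and M covers x1 (which differs from v).
   Replacing the N-edges vx1 and x2x3 by x1x2 and vx3 gives another perfect
   matching N' (the 2-edge switch lemma below) that differs from N in just four
   edges.  The removed edges both lie outside M (M avoids v, and x2 is already
   matched to x1 in M), so they weigh 2; of the added edges x1x2 lies in M, so
   they weigh 1.  Thus N' is a strict improvement, a contradiction. *)

lemma perfect_matching_partner:
  assumes "perfect_matching V N" "x \<in> V"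
  shows "\<exists>y. {x, y} \<in> N \<and> y \<in> V \<and> y \<noteq> x"
proof -
  from assms obtain e where e: "e \<in> N" "x \<in> e"
    unfolding perfect_matching_def by blast
  then have "e \<in> complete_edges V"
    using assms(1) unfolding perfect_matching_def matching_def by blast
  with e show ?thesis
    unfolding complete_edges_def by (auto simp: insert_commute)
qed

lemma perfect_matching_disjoint:
  assumes "perfect_matching V N" "e \<in> N" "f \<in> N" "e \<noteq> f"
  shows "e \<inter> f = {}"
  using assms unfolding perfect_matching_def matching_def by blast

lemma matching_avoids_removed_vertex:
  assumes "perfect_matching (V - {v}) M" "e \<in> M"
  shows "v \<notin> e"
  using assms unfolding perfect_matching_def matching_def complete_edges_def by blast

lemma switch_perfect_matching:
  assumes pN: "perfect_matching V N"
    and ab: "{a, b} \<in> N" and cd: "{c, d} \<in> N" and ne: "{a, b} \<noteq> {c, d}"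
  shows "perfect_matching V (N - {{a, b}, {c, d}} \<union> {{b, c}, {a, d}})"
    (is "perfect_matching V ?N'")
proof -
  let ?R = "N - {{a, b}, {c, d}}"
  have edges: "N \<subseteq> complete_edges V"
    using pN unfolding perfect_matching_def matching_def by blast
  have "a \<noteq> b" "c \<noteq> d" "{a, b, c, d} \<subseteq> V"
    using edges ab cd unfolding complete_edges_def by (auto simp: doubleton_eq_iff)
  moreover have "{a, b} \<inter> {c, d} = {}"
    using perfect_matching_disjoint[OF pN ab cd ne] .
  ultimately have distinct: "a \<noteq> b" "c \<noteq> d" "a \<noteq> c" "a \<noteq> d" "b \<noteq> c" "b \<noteq> d"
    and in_V: "{a, b, c, d} \<subseteq> V" by auto
  have rest: "e \<inter> {a, b, c, d} = {}" if "e \<in> ?R" for e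
    using that perfect_matching_disjoint[OF pN _ ab, of e]
      perfect_matching_disjoint[OF pN _ cd, of e] by blast
  have new_edges: "{b, c} \<in> complete_edges V" "{a, d} \<in> complete_edges V"
    using distinct in_V unfolding complete_edges_def by blast+
  have "matching V ?N'"
    unfolding matching_def
  proof (intro conjI ballI impI)
    show "?N' \<subseteq> complete_edges V" using edges new_edges by blast
  next
    fix e f assume e: "e \<in> ?N'" and f: "f \<in> ?N'" and "e \<noteq> f"
    have added: "g \<subseteq> {a, b, c, d}" if "g \<in> ?N'" "g \<notin> ?R" for g
      using that by blast
    consider "e \<in> ?R" "f \<in> ?R" | "e \<in> ?R" "f \<notin> ?R" | "e \<notin> ?R" "f \<in> ?R"
      | "e \<notin> ?R" "f \<notin> ?R" by blast
    then show "e \<inter> f = {}"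
    proof cases
      case 1
      then show ?thesis using perfect_matching_disjoint[OF pN _ _ \<open>e \<noteq> f\<close>] by blast
    next
      case 2
      then show ?thesis using rest[of e] added[OF f] by blast
    next
      case 3
      then show ?thesis using rest[of f] added[OF e] by blast
    next
      case 4
      then have "e \<in> {{b, c}, {a, d}}" "f \<in> {{b, c}, {a, d}}" using e f by blast+
      moreover have "{b, c} \<inter> {a, d} = {}" using distinct by auto
      ultimately show ?thesis using \<open>e \<noteq> f\<close> by blast
    qed
  qed
  moreover have "\<exists>e\<in>?N'. x \<in> e" if "x \<in> V" for x
  proof -
    obtain e where e: "e \<in> N" "x \<in> e"
      using pN \<open>x \<in> V\<close> unfolding perfect_matching_def by blast
    show ?thesis
    proof (cases "e \<in> ?R")
      case False
      then have "e = {a, b} \<or> e = {c, d}" using e by blast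
      then have "x \<in> {b, c} \<or> x \<in> {a, d}" using e by auto
      moreover have "{b, c} \<in> ?N'" "{a, d} \<in> ?N'" by simp_all
      ultimately show ?thesis by (elim disjE) (rule bexI, assumption, assumption)+
    next
      case True
      then show ?thesis using e by (intro bexI[of _ e]) simp_all
    qed
  qed
  ultimately show ?thesis unfolding perfect_matching_def by blast
qed

lemma switch_differences:
  assumes pN: "perfect_matching V N"
    and ab: "{a, b} \<in> N" and cd: "{c, d} \<in> N" and ne: "{a, b} \<noteq> {c, d}"
  defines "N' \<equiv> N - {{a, b}, {c, d}} \<union> {{b, c}, {a, d}}"
  shows "N - N' = {{a, b}, {c, d}}" and "N' - N = {{b, c}, {a, d}}"
proof -
  have abcd: "{a, b} \<inter> {c, d} = {}"
    using perfect_matching_disjoint[OF pN ab cd ne] .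
  have "{b, c} \<notin> N"
    using perfect_matching_disjoint[OF pN _ ab, of "{b, c}"] abcd by auto
  moreover have "{a, d} \<notin> N"
    using perfect_matching_disjoint[OF pN _ ab, of "{a, d}"] abcd by auto
  ultimately show "N - N' = {{a, b}, {c, d}}" "N' - N = {{b, c}, {a, d}}"
    using ab cd by (auto simp: N'_def)
qed

lemma alternating_walk:
  assumes pN: "perfect_matching V N" and pM: "perfect_matching (V - {v}) M"
    and v: "v \<in> V"
  obtains x1 x2 x3 where "{v, x1} \<in> N" "{x1, x2} \<in> M" "{x2, x3} \<in> N"
    "{v, x1} \<noteq> {x2, x3}" "{v, x1} \<notin> M" "{x2, x3} \<notin> M" "{x1, x2} \<noteq> {v, x3}"
proof -
  obtain x1 where e1: "{v, x1} \<in> N" "x1 \<in> V" "x1 \<noteq> v"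
    using perfect_matching_partner[OF pN v] by blast
  obtain x2 where f1: "{x1, x2} \<in> M" "x2 \<in> V - {v}" "x2 \<noteq> x1"
    using perfect_matching_partner[OF pM, of x1] e1 by blast
  obtain x3 where e2: "{x2, x3} \<in> N"
    using perfect_matching_partner[OF pN, of x2] f1 by blast
  have ne: "{v, x1} \<noteq> {x2, x3}"
    using f1 by (auto simp: doubleton_eq_iff)
  have x3: "x3 \<noteq> x1" "x3 \<noteq> v"
    using perfect_matching_disjoint[OF pN e1(1) e2 ne] by auto
  have "{x2, x3} \<notin> M"
  proof
    assume "{x2, x3} \<in> M"
    then have "{x1, x2} = {x2, x3}"
      using perfect_matching_disjoint[OF pM f1(1)] by blast
    then show False using x3 f1(3) by (auto simp: doubleton_eq_iff)
  qed
  moreover have "{v, x1} \<notin> M"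
    using matching_avoids_removed_vertex[OF pM] by blast
  moreover have "{x1, x2} \<noteq> {v, x3}"
    using e1(3) f1(2) by (auto simp: doubleton_eq_iff)
  ultimately show ?thesis using that e1(1) f1(1) e2 ne by blast
qed

theorem mainTheorem8:
  fixes V :: "'a set" and v :: 'a and M :: "'a set set" and w :: "'a set \<Rightarrow> nat"
  assumes "infinite V" and "v \<in> V" and "perfect_matching (V - {v}) M"
    and "\<And>e. w e = (if e \<in> M then 0 else 1)"
  shows "\<not> (\<exists>N. perfect_matching V N \<and>
            (\<forall>N'. perfect_matching V N' \<and> finite (N - N') \<and> finite (N' - N)
                  \<longrightarrow> sum w (N' - N) \<ge> sum w (N - N')))"
proof
  assume "\<exists>N. perfect_matching V N \<and>
            (\<forall>N'. perfect_matching V N' \<and> finite (N - N') \<and> finite (N' - N)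
                  \<longrightarrow> sum w (N' - N) \<ge> sum w (N - N'))"
  then obtain N where pN: "perfect_matching V N"
    and optimal: "\<And>N'. perfect_matching V N' \<Longrightarrow> finite (N - N') \<Longrightarrow> finite (N' - N)
                    \<Longrightarrow> sum w (N' - N) \<ge> sum w (N - N')" by blast
  obtain x1 x2 x3 where walk: "{v, x1} \<in> N" "{x1, x2} \<in> M" "{x2, x3} \<in> N"
    "{v, x1} \<noteq> {x2, x3}" "{v, x1} \<notin> M" "{x2, x3} \<notin> M" "{x1, x2} \<noteq> {v, x3}"
    using alternating_walk[OF pN assms(3,2)] by blast
  define N' where "N' = N - {{v, x1}, {x2, x3}} \<union> {{x1, x2}, {v, x3}}"
  have pN': "perfect_matching V N'"
    unfolding N'_def using switch_perfect_matching[OF pN walk(1,3,4)] .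
  have removed: "N - N' = {{v, x1}, {x2, x3}}" and added: "N' - N = {{x1, x2}, {v, x3}}"
    unfolding N'_def using switch_differences[OF pN walk(1,3,4)] by blast+
  have "sum w (N - N') = 2"
    unfolding removed using walk(4-6) assms(4) by simp
  moreover have "sum w (N' - N) \<le> 1"
    unfolding added using walk(2,7) assms(4) by simp
  moreover have "sum w (N' - N) \<ge> sum w (N - N')"
    using optimal[OF pN'] removed added by simp
  ultimately show False by simp
qed

end
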